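(* Let $G$ be a graph with no isolated vertex and let $H$ be a nontrivial graph (i.e., of order at least two) such that $\gamma_I(H)\ne 3$ or $\gamma(H)\ne 3$. Then: (i) if $\gamma(H)=1$, then $\gamma_I(G\circ H)=\gamma_{(2,1,0)}(G)$; (ii) if $\gamma_2(H)=\gamma(H)=2$, then $\gamma_I(G\circ H)=\gamma_{(2,2,0)}(G)$; (iii) if $\gamma_2(H)>\gamma(H)=2$, then $\gamma_I(G\circ H)=\gamma_{(2,2,1)}(G)$; (iv) if $\gamma(H)\ge 3$, then $\gamma_I(G\circ H)=\gamma_{(2,2,2)}(G)$.
   Context: All graphs are finite and simple; $N(v)$ denotes the open neighbourhood of a vertex $v$. For an integer $l\ge1$ and a vector $w=(w_0,\dots,w_l)$ of nonnegative integers with $w_0\ge 1$, a function $f:V(G)\to\{0,1,\dots,l\}$ is a $w$-dominating function on $G$ if $\sum_{u\in N(v)}f(u)\ge w_i$ for every vertex $v$ with $f(v)=i$ ($i=0,\dots,l$). The weight of $f$ is $\omega(f)=\sum_{v\in V(G)}f(v)$, and the $w$-domination number $\gamma_w(G)=\gamma_{(w_0,\dots,w_l)}(G)$ is the minimum weight of a $w$-dominating function on $G$. The Italian domination number is $\gamma_I(G)=\gamma_{(2,0,0)}(G)$, i.e., the minimum weight of $f:V(G)\to\{0,1,2\}$ with $\sum_{u\in N(v)}f(u)\ge 2$ for every $v$ with $f(v)=0$. $\gamma(H)$ is the domination number of $H$, and $\gamma_2(H)$ is the $2$-domination number: the minimum cardinality of a set $S\subseteq V(H)$ such that every vertex not in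 $S$ has at least two neighbours in $S$. The lexicographic product $G\circ H$ has vertex set $V(G)\times V(H)$, with $(u,v)(x,y)$ an edge iff $ux\in E(G)$, or $u=x$ and $vy\in E(H)$. *)

theory Defs
  imports Main
begin

definition simple_graph :: "'a set \<Rightarrow> ('a \<Rightarrow> 'a \<Rightarrow> bool) \<Rightarrow> bool" where
  "simple_graph V E \<longleftrightarrow> finite V \<and> (\<forall>u v. E u v \<longrightarrow> u \<in> V \<and> v \<in> V)
     \<and> (\<forall>u v. E u v \<longrightarrow> E v u) \<and> (\<forall>v. \<not> E v v)"

definition nbhd :: "'a set \<Rightarrow> ('a \<Rightarrow> 'a \<Rightarrow> bool) \<Rightarrow> 'a \<Rightarrow> 'a set" where
  "nbhd V E v = {u \<in> V. E v u}"

definition no_isolated :: "'a set \<Rightarrow> ('a \<Rightarrow> 'a \<Rightarrow> bool) \<Rightarrow> bool" where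
  "no_isolated V E \<longleftrightarrow> (\<forall>v\<in>V. nbhd V E v \<noteq> {})"

text \<open>w-dominating functions: the vector w = (w_0,...,w_l) is the list w, l = length w - 1.
  Functions are required to vanish outside V.\<close>

definition w_dominating :: "'a set \<Rightarrow> ('a \<Rightarrow> 'a \<Rightarrow> bool) \<Rightarrow> nat list \<Rightarrow> ('a \<Rightarrow> nat) \<Rightarrow> bool" where
  "w_dominating V E w f \<longleftrightarrow> (\<forall>v. v \<notin> V \<longrightarrow> f v = 0)
     \<and> (\<forall>v\<in>V. f v < length w \<and> (\<Sum>u\<in>nbhd V E v. f u) \<ge> w ! (f v))"

definition gamma_w :: "'a set \<Rightarrow> ('a \<Rightarrow> 'a \<Rightarrow> bool) \<Rightarrow> nat list \<Rightarrow> nat" where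
  "gamma_w V E w = (LEAST k. \<exists>f. w_dominating V E w f \<and> (\<Sum>v\<in>V. f v) = k)"

definition italian_domination_number :: "'a set \<Rightarrow> ('a \<Rightarrow> 'a \<Rightarrow> bool) \<Rightarrow> nat" where
  "italian_domination_number V E = gamma_w V E [2, 0, 0]"

definition dominating_set :: "'a set \<Rightarrow> ('a \<Rightarrow> 'a \<Rightarrow> bool) \<Rightarrow> 'a set \<Rightarrow> bool" where
  "dominating_set V E S \<longleftrightarrow> S \<subseteq> V \<and> (\<forall>v\<in>V - S. nbhd V E v \<inter> S \<noteq> {})"

definition domination_number :: "'a set \<Rightarrow> ('a \<Rightarrow> 'a \<Rightarrow> bool) \<Rightarrow> nat" where
  "domination_number V E = (LEAST k. \<exists>S. dominating_set V E S \<and> card S = k)"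

definition two_dominating_set :: "'a set \<Rightarrow> ('a \<Rightarrow> 'a \<Rightarrow> bool) \<Rightarrow> 'a set \<Rightarrow> bool" where
  "two_dominating_set V E S \<longleftrightarrow> S \<subseteq> V \<and> (\<forall>v\<in>V - S. card (nbhd V E v \<inter> S) \<ge> 2)"

definition two_domination_number :: "'a set \<Rightarrow> ('a \<Rightarrow> 'a \<Rightarrow> bool) \<Rightarrow> nat" where
  "two_domination_number V E = (LEAST k. \<exists>S. two_dominating_set V E S \<and> card S = k)"

definition lex_vertices :: "'a set \<Rightarrow> 'b set \<Rightarrow> ('a \<times> 'b) set" where
  "lex_vertices VG VH = VG \<times> VH"

definition lex_edges :: "'a set \<Rightarrow> ('a \<Rightarrow> 'a \<Rightarrow> bool) \<Rightarrow> 'b set \<Rightarrow> ('b \<Rightarrow> 'b \<Rightarrow> bool)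
    \<Rightarrow> ('a \<times> 'b) \<Rightarrow> ('a \<times> 'b) \<Rightarrow> bool" where
  "lex_edges VG EG VH EH p q \<longleftrightarrow> p \<in> VG \<times> VH \<and> q \<in> VG \<times> VH \<and>
     (EG (fst p) (fst q) \<or> (fst p = fst q \<and> EH (snd p) (snd q)))"

end

theory Submission
  imports Defs
begin

(* An Italian dominating function f of G \<circ> H restricts, on the copy of H over a vertex x,
   to a function that is Italian dominating in H once every vertex of the copy is credited
   with the weight s that f places on the copies over N(x). Depending on \<gamma>(H), \<gamma>\<^sub>2(H)
   and \<gamma>\<^sub>I(H), a copy of total weight t then satisfies w_k + k \<le> s + t for k = min t 2,
   which is the w-domination condition for the column sums of f, except that column sums
   may exceed 2. Capping them at 2 and handing the excess to a neighbour (G has no isolated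
   vertex) gives a w-dominating function of G of no larger weight. Conversely, a w-dominating
   function g of G lifts to G \<circ> H by placing on the copy over x a fixed pattern of total
   weight g x that is Italian dominating in H once credited with w_(g x). *)

definition italian_with_supply :: "'a set \<Rightarrow> ('a \<Rightarrow> 'a \<Rightarrow> bool) \<Rightarrow> nat \<Rightarrow> ('a \<Rightarrow> nat) \<Rightarrow> bool" where
  "italian_with_supply V E s h \<longleftrightarrow> (\<forall>v. v \<notin> V \<longrightarrow> h v = 0)
     \<and> (\<forall>v\<in>V. h v < 3 \<and> (h v = 0 \<longrightarrow> 2 \<le> s + (\<Sum>u\<in>nbhd V E v. h u)))"

lemma w_dominating_italian_iff:
  "w_dominating V E [2, 0, 0] h \<longleftrightarrow> italian_with_supply V E 0 h"
proof -
  have "[2, 0, 0] ! n = (if n = 0 then 2 else 0 :: nat)" if "n < 3" for n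
    using that by (auto simp: less_Suc_eq numeral_3_eq_3)
  then show ?thesis
    unfolding w_dominating_def italian_with_supply_def by auto
qed

lemma gamma_w_le_sum: "w_dominating V E w f \<Longrightarrow> gamma_w V E w \<le> (\<Sum>v\<in>V. f v)"
  unfolding gamma_w_def by (rule Least_le) blast

lemma gamma_w_attained:
  "w_dominating V E w f \<Longrightarrow> \<exists>g. w_dominating V E w g \<and> (\<Sum>v\<in>V. g v) = gamma_w V E w"
  unfolding gamma_w_def by (rule LeastI[of _ "\<Sum>v\<in>V. f v"]) blast

lemma italian_domination_number_attained:
  "\<exists>h. italian_with_supply V E 0 h \<and> (\<Sum>v\<in>V. h v) = italian_domination_number V E"
proof -
  have "w_dominating V E [2, 0, 0] (\<lambda>v. if v \<in> V then 1 else 0)"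
    unfolding w_dominating_def by auto
  then obtain h where "w_dominating V E [2, 0, 0] h" "(\<Sum>v\<in>V. h v) = gamma_w V E [2, 0, 0]"
    using gamma_w_attained by blast
  then show ?thesis
    unfolding italian_domination_number_def w_dominating_italian_iff by blast
qed

lemma italian_domination_number_le_sum:
  "italian_with_supply V E 0 h \<Longrightarrow> italian_domination_number V E \<le> (\<Sum>v\<in>V. h v)"
  unfolding italian_domination_number_def w_dominating_italian_iff[symmetric] by (rule gamma_w_le_sum)

lemma domination_number_attained: "\<exists>S. dominating_set V E S \<and> card S = domination_number V E"
  unfolding domination_number_def by (rule LeastI[of _ "card V"]) (auto simp: dominating_set_def)

lemma domination_number_le_card: "dominating_set V E S \<Longrightarrow> domination_number V E \<le> card S"
  unfolding domination_number_def by (rule Least_le) blast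

lemma two_domination_number_attained:
  "\<exists>S. two_dominating_set V E S \<and> card S = two_domination_number V E"
  unfolding two_domination_number_def
  by (rule LeastI[of _ "card V"]) (auto simp: two_dominating_set_def)

lemma two_domination_number_le_card:
  "two_dominating_set V E S \<Longrightarrow> two_domination_number V E \<le> card S"
  unfolding two_domination_number_def by (rule Least_le) blast

lemma nbhd_subset: "nbhd V E v \<subseteq> V"
  by (auto simp: nbhd_def)

lemma simple_graph_finite: "simple_graph V E \<Longrightarrow> finite V"
  by (simp add: simple_graph_def)

lemma card_support_le_sum:
  fixes h :: "'a \<Rightarrow> nat"
  assumes "finite A"
  shows "card {x\<in>A. 0 < h x} \<le> sum h A"
proof -
  have "card {x\<in>A. 0 < h x} = (\<Sum>x\<in>{x\<in>A. 0 < h x}. 1)" by simp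
  also have "\<dots> \<le> (\<Sum>x\<in>{x\<in>A. 0 < h x}. h x)" by (intro sum_mono) auto
  also have "\<dots> \<le> sum h A" using assms by (intro sum_mono2) auto
  finally show ?thesis .
qed

lemma sum_eq_card_support:
  fixes h :: "'a \<Rightarrow> nat"
  assumes "finite A" "\<forall>x\<in>A. h x \<le> 1"
  shows "sum h A = card {x\<in>A. 0 < h x}"
proof -
  have "sum h A = (\<Sum>x\<in>A. if 0 < h x then 1 else 0)"
    using assms(2) by (intro sum.cong) auto
  also have "\<dots> = card {x\<in>A. 0 < h x}"
    using assms(1) by (simp add: sum.If_cases Int_def)
  finally show ?thesis .
qed

lemma sum_uniform_on:
  fixes c :: nat
  assumes "finite A"
  shows "(\<Sum>x\<in>A. if x \<in> S then c else 0) = c * card (A \<inter> S)"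
  using assms by (simp add: sum.If_cases Int_def)

lemma italian_with_supply_total_ge:
  assumes V: "card V \<ge> 2" and h: "italian_with_supply V E s h"
  shows "2 \<le> s + sum h V"
proof (cases "sum h V \<le> 1")
  case True
  have fin: "finite V" using V card.infinite by fastforce
  obtain y where y: "y \<in> V" "h y = 0"
  proof (rule ccontr)
    assume "\<not> thesis"
    then have "\<forall>y\<in>V. 1 \<le> h y" using that by fastforce
    then have "card V \<le> sum h V" using sum_mono[of V "\<lambda>_. 1" h] by simp
    with V True show False by linarith
  qed
  then have "2 \<le> s + (\<Sum>u\<in>nbhd V E y. h u)" using h by (auto simp: italian_with_supply_def)
  also have "(\<Sum>u\<in>nbhd V E y. h u) \<le> sum h V"
    using fin nbhd_subset[of V E y] by (intro sum_mono2) auto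
  finally show ?thesis by simp
qed simp

lemma dominating_set_support:
  assumes h: "italian_with_supply V E s h" and s: "s \<le> 1"
  shows "dominating_set V E {v\<in>V. 0 < h v}"
  unfolding dominating_set_def
proof (intro conjI ballI)
  fix y assume "y \<in> V - {v\<in>V. 0 < h v}"
  then have "2 \<le> s + (\<Sum>u\<in>nbhd V E y. h u)" using h by (auto simp: italian_with_supply_def)
  with s have "(\<Sum>u\<in>nbhd V E y. h u) \<noteq> 0" by linarith
  then obtain u where "u \<in> nbhd V E y" "h u \<noteq> 0" by (meson sum.neutral)
  then show "nbhd V E y \<inter> {v\<in>V. 0 < h v} \<noteq> {}" using nbhd_subset[of V E y] by blast
qed auto

lemma two_dominating_set_support:
  assumes fin: "finite V" and h: "italian_with_supply V E 0 h" and le1: "\<forall>v. h v \<le> 1"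
  shows "two_dominating_set V E {v\<in>V. 0 < h v}"
  unfolding two_dominating_set_def
proof (intro conjI ballI)
  fix y assume "y \<in> V - {v\<in>V. 0 < h v}"
  then have "2 \<le> (\<Sum>u\<in>nbhd V E y. h u)" using h by (auto simp: italian_with_supply_def)
  also have "\<dots> = card {u\<in>nbhd V E y. 0 < h u}"
    using le1 finite_subset[OF nbhd_subset fin] by (intro sum_eq_card_support) auto
  also have "{u\<in>nbhd V E y. 0 < h u} = nbhd V E y \<inter> {v\<in>V. 0 < h v}"
    using nbhd_subset[of V E y] by blast
  finally show "2 \<le> card (nbhd V E y \<inter> {v\<in>V. 0 < h v})" .
qed auto

lemma domination_number_le_sum:
  assumes "finite V" "italian_with_supply V E s h" "s \<le> 1"
  shows "domination_number V E \<le> sum h V"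
  using domination_number_le_card[OF dominating_set_support[OF assms(2,3)]]
    card_support_le_sum[OF assms(1), of h] by linarith

lemma domination_number_le_italian:
  assumes "finite V"
  shows "domination_number V E \<le> italian_domination_number V E"
  using italian_domination_number_attained[of V E] domination_number_le_sum[OF assms] by fastforce

lemma italian_domination_number_ge_3:
  assumes V: "card V \<ge> 2" and dom: "domination_number V E \<ge> 2"
    and two_dom: "two_domination_number V E > 2"
  shows "italian_domination_number V E \<ge> 3"
proof (rule ccontr)
  assume less: "\<not> ?thesis"
  obtain h where h: "italian_with_supply V E 0 h" and t: "sum h V = italian_domination_number V E"
    using italian_domination_number_attained by blast
  have fin: "finite V" using V card.infinite by fastforce
  have t2: "sum h V = 2" using italian_with_supply_total_ge[OF V h] less t by linarith
  (* weight 2 is either a single 2 on a dominating vertex or two 1s on a 2-dominating pair *)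
  show False
  proof (cases "\<exists>y\<in>V. 2 \<le> h y")
    case True
    then obtain y where y: "y \<in> V" "2 \<le> h y" by blast
    have "{v\<in>V. 0 < h v} \<subseteq> {y}"
    proof
      fix x assume x: "x \<in> {v\<in>V. 0 < h v}"
      show "x \<in> {y}"
      proof (rule ccontr)
        assume "x \<notin> {y}"
        then have "h x + h y \<le> sum h V"
          using x y fin sum_mono2[of V "{x, y}" h] by auto
        with x y t2 show False by simp
      qed
    qed
    then have "card {v\<in>V. 0 < h v} \<le> 1" using card_mono[of "{y}"] by fastforce
    then show False
      using domination_number_le_card[OF dominating_set_support[OF h]] dom by simp
  next
    case False
    have le1: "\<forall>v. h v \<le> 1"
    proof
      fix v
      show "h v \<le> 1" using False h by (cases "v \<in> V") (auto simp: italian_with_supply_def)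
    qed
    have "two_domination_number V E \<le> 2"
      using two_domination_number_le_card[OF two_dominating_set_support[OF fin h le1]]
        card_support_le_sum[OF fin, of h] t2 by linarith
    with two_dom show False by simp
  qed
qed

lemma sum_min_2_le: "finite A \<Longrightarrow> min (\<Sum>x\<in>A. a x) 2 \<le> (\<Sum>x\<in>A. min (a x :: nat) 2)"
  by (induction A rule: finite_induct) auto

lemma ex_transfer_to_neighbours:
  fixes e :: "'a \<Rightarrow> nat"
  assumes fin: "finite V" and noiso: "no_isolated V E"
  shows "\<exists>a. (\<forall>v\<in>V. e v \<le> (\<Sum>u\<in>nbhd V E v. a u)) \<and> (\<Sum>v\<in>V. a v) = (\<Sum>v\<in>V. e v)"
proof -
  define c where "c v = (SOME u. u \<in> nbhd V E v)" for v
  have c: "c v \<in> nbhd V E v" if "v \<in> V" for v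
    using noiso that unfolding no_isolated_def c_def by (simp add: some_in_eq)
  define a where "a u = (\<Sum>v\<in>{v\<in>V. c v = u}. e v)" for u
  have "e v \<le> (\<Sum>u\<in>nbhd V E v. a u)" if v: "v \<in> V" for v
  proof -
    have "e v \<le> a (c v)"
      unfolding a_def using v fin by (intro member_le_sum) simp_all
    also have "\<dots> \<le> (\<Sum>u\<in>nbhd V E v. a u)"
      using c[OF v] finite_subset[OF nbhd_subset fin] by (intro member_le_sum) simp_all
    finally show ?thesis .
  qed
  moreover have "(\<Sum>v\<in>V. a v) = (\<Sum>v\<in>V. e v)"
  proof -
    have "c ` V \<subseteq> V" using c nbhd_subset[of V E] by blast
    then show ?thesis unfolding a_def by (rule sum.group[OF fin fin])
  qed
  ultimately show ?thesis by blast
qed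

lemma ex_w_dominating_by_capping:
  fixes F :: "'a \<Rightarrow> nat" and w :: "nat list"
  assumes fin: "finite V" and noiso: "no_isolated V E"
    and w: "length w = 3" "sorted_wrt (\<ge>) w" "\<forall>a\<in>set w. a \<le> 2"
    and F: "\<forall>v\<in>V. w ! min (F v) 2 + min (F v) 2 \<le> (\<Sum>u\<in>nbhd V E v. F u) + F v"
  shows "\<exists>g. w_dominating V E w g \<and> (\<Sum>v\<in>V. g v) \<le> (\<Sum>v\<in>V. F v)"
proof -
  obtain a where a: "\<forall>v\<in>V. F v - 2 \<le> (\<Sum>u\<in>nbhd V E v. a u)"
    and sum_a: "(\<Sum>v\<in>V. a v) = (\<Sum>v\<in>V. F v - 2)"
    using ex_transfer_to_neighbours[OF fin noiso, of "\<lambda>v. F v - 2"] by blast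
  define g where "g v = (if v \<in> V then min (F v + a v) 2 else 0)" for v
  have "w_dominating V E w g"
    unfolding w_dominating_def
  proof (intro conjI allI impI ballI)
    fix v assume v: "v \<in> V"
    show g_less: "g v < length w" using w(1) v by (simp add: g_def)
    let ?m = "min (F v) 2"
    have "?m \<le> g v" using v by (simp add: g_def)
    then have "w ! g v \<le> w ! ?m"
      using sorted_wrt_nth_less[OF w(2) _ g_less] by (cases "?m = g v") simp_all
    also have "w ! ?m \<le> min (\<Sum>u\<in>nbhd V E v. F u + a u) 2"
    proof -
      have "w ! ?m \<le> 2" using w(1,3) nth_mem[of ?m w] by simp
      moreover have "w ! ?m + ?m \<le> (\<Sum>u\<in>nbhd V E v. F u) + F v" using F v by blast
      moreover have "F v - 2 \<le> (\<Sum>u\<in>nbhd V E v. a u)" using a v by blast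
      ultimately show ?thesis unfolding sum.distrib by linarith
    qed
    also have "\<dots> \<le> (\<Sum>u\<in>nbhd V E v. min (F u + a u) 2)"
      using finite_subset[OF nbhd_subset fin] by (rule sum_min_2_le)
    also have "\<dots> = (\<Sum>u\<in>nbhd V E v. g u)"
      using nbhd_subset[of V E v] by (intro sum.cong) (auto simp: g_def)
    finally show "w ! g v \<le> (\<Sum>u\<in>nbhd V E v. g u)" .
  qed (simp add: g_def)
  moreover have "(\<Sum>v\<in>V. g v) \<le> (\<Sum>v\<in>V. F v)"
  proof -
    have "(\<Sum>v\<in>V. g v) \<le> (\<Sum>v\<in>V. min (F v) 2 + a v)"
      by (intro sum_mono) (auto simp: g_def)
    also have "\<dots> = (\<Sum>v\<in>V. min (F v) 2 + (F v - 2))"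
      by (simp add: sum.distrib sum_a)
    also have "\<dots> = (\<Sum>v\<in>V. F v)"
      by (intro sum.cong) auto
    finally show ?thesis .
  qed
  ultimately show ?thesis by (intro exI[of _ g] conjI)
qed

lemma sum_lex_vertices:
  "(\<Sum>p\<in>lex_vertices VG VH. f p) = (\<Sum>x\<in>VG. \<Sum>y\<in>VH. f (x, y))"
  unfolding lex_vertices_def by (simp add: sum.cartesian_product)

lemma nbhd_lex:
  assumes G: "simple_graph VG EG" and H: "simple_graph VH EH" and xy: "x \<in> VG" "y \<in> VH"
  shows "nbhd (lex_vertices VG VH) (lex_edges VG EG VH EH) (x, y)
     = nbhd VG EG x \<times> VH \<union> {x} \<times> nbhd VH EH y"
  using xy G H unfolding nbhd_def lex_vertices_def lex_edges_def simple_graph_def by auto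

lemma sum_nbhd_lex:
  fixes f :: "'a \<times> 'b \<Rightarrow> nat"
  assumes G: "simple_graph VG EG" and H: "simple_graph VH EH" and xy: "x \<in> VG" "y \<in> VH"
  shows "(\<Sum>p\<in>nbhd (lex_vertices VG VH) (lex_edges VG EG VH EH) (x, y). f p)
     = (\<Sum>u\<in>nbhd VG EG x. \<Sum>y'\<in>VH. f (u, y')) + (\<Sum>y'\<in>nbhd VH EH y. f (x, y'))"
proof -
  have fin: "finite VG" "finite VH" using G H by (simp_all add: simple_graph_finite)
  have "(nbhd VG EG x \<times> VH) \<inter> ({x} \<times> nbhd VH EH y) = {}"
    using G unfolding nbhd_def simple_graph_def by auto
  then have "(\<Sum>p\<in>nbhd (lex_vertices VG VH) (lex_edges VG EG VH EH) (x, y). f p)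
      = (\<Sum>p\<in>nbhd VG EG x \<times> VH. f p) + (\<Sum>p\<in>{x} \<times> nbhd VH EH y. f p)"
    unfolding nbhd_lex[OF G H xy]
    using fin finite_subset[OF nbhd_subset fin(1)] finite_subset[OF nbhd_subset fin(2)] by (intro sum.union_disjoint) auto
  also have "\<dots> = (\<Sum>u\<in>nbhd VG EG x. \<Sum>y'\<in>VH. f (u, y')) + (\<Sum>y'\<in>nbhd VH EH y. f (x, y'))"
    by (simp add: sum.cartesian_product')
  finally show ?thesis .
qed

lemma italian_with_supply_lex_column:
  assumes G: "simple_graph VG EG" and H: "simple_graph VH EH"
    and f: "italian_with_supply (lex_vertices VG VH) (lex_edges VG EG VH EH) 0 f" and x: "x \<in> VG"
  shows "italian_with_supply VH EH (\<Sum>u\<in>nbhd VG EG x. \<Sum>y\<in>VH. f (u, y)) (\<lambda>y. f (x, y))"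
  using f x sum_nbhd_lex[OF G H x, of _ f]
  unfolding italian_with_supply_def lex_vertices_def by auto

lemma ex_w_dominating_le_italian_lex:
  fixes w :: "nat list"
  assumes G: "simple_graph VG EG" and noiso: "no_isolated VG EG" and H: "simple_graph VH EH"
    and w: "length w = 3" "sorted_wrt (\<ge>) w" "\<forall>a\<in>set w. a \<le> 2"
    and column: "\<And>s h. italian_with_supply VH EH s h \<Longrightarrow>
        w ! min (sum h VH) 2 + min (sum h VH) 2 \<le> s + sum h VH"
  shows "\<exists>g. w_dominating VG EG w g
     \<and> (\<Sum>x\<in>VG. g x) \<le> italian_domination_number (lex_vertices VG VH) (lex_edges VG EG VH EH)"
proof -
  obtain f where f: "italian_with_supply (lex_vertices VG VH) (lex_edges VG EG VH EH) 0 f"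
    and sum_f: "(\<Sum>p\<in>lex_vertices VG VH. f p)
       = italian_domination_number (lex_vertices VG VH) (lex_edges VG EG VH EH)"
    using italian_domination_number_attained by blast
  define F where "F x = (\<Sum>y\<in>VH. f (x, y))" for x
  have "\<forall>x\<in>VG. w ! min (F x) 2 + min (F x) 2 \<le> (\<Sum>u\<in>nbhd VG EG x. F u) + F x"
    using column[OF italian_with_supply_lex_column[OF G H f]] unfolding F_def by simp
  moreover have "finite VG" using G by (rule simple_graph_finite)
  ultimately obtain g where "w_dominating VG EG w g" "(\<Sum>x\<in>VG. g x) \<le> (\<Sum>x\<in>VG. F x)"
    using ex_w_dominating_by_capping[OF _ noiso w] by blast
  moreover have "(\<Sum>x\<in>VG. F x) = (\<Sum>p\<in>lex_vertices VG VH. f p)"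
    unfolding sum_lex_vertices F_def ..
  ultimately show ?thesis using sum_f by auto
qed

lemma italian_lex_le_w_dominating:
  fixes w :: "nat list"
  assumes G: "simple_graph VG EG" and H: "simple_graph VH EH"
    and patterns: "\<And>k. k < length w \<Longrightarrow> \<exists>h. italian_with_supply VH EH (w ! k) h \<and> sum h VH = k"
    and g: "w_dominating VG EG w g"
  shows "italian_domination_number (lex_vertices VG VH) (lex_edges VG EG VH EH) \<le> (\<Sum>x\<in>VG. g x)"
proof -
  obtain P where P: "\<And>k. k < length w \<Longrightarrow> italian_with_supply VH EH (w ! k) (P k) \<and> sum (P k) VH = k"
    using patterns by metis
  have g_less: "g x < length w" "w ! g x \<le> (\<Sum>u\<in>nbhd VG EG x. g u)" if "x \<in> VG" for x
    using g that unfolding w_dominating_def by auto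
  define f where "f p = (if fst p \<in> VG then P (g (fst p)) (snd p) else 0)" for p
  have col: "(\<Sum>y\<in>VH. f (x, y)) = g x" if "x \<in> VG" for x
    using P g_less(1) that unfolding f_def by simp
  have "italian_with_supply (lex_vertices VG VH) (lex_edges VG EG VH EH) 0 f"
    unfolding italian_with_supply_def
  proof (intro conjI allI impI ballI)
    fix p assume "p \<notin> lex_vertices VG VH"
    then show "f p = 0"
      using P g_less(1) unfolding f_def lex_vertices_def italian_with_supply_def by (cases p) auto
  next
    fix p assume "p \<in> lex_vertices VG VH"
    then obtain x y where p: "p = (x, y)" and xy: "x \<in> VG" "y \<in> VH"
      unfolding lex_vertices_def by auto
    have Px: "italian_with_supply VH EH (w ! g x) (P (g x))" using P g_less(1)[OF xy(1)] by blast
    then show "f p < 3" using xy unfolding p f_def italian_with_supply_def by simp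
    assume "f p = 0"
    then have "2 \<le> w ! g x + (\<Sum>y'\<in>nbhd VH EH y. P (g x) y')"
      using Px xy unfolding p f_def italian_with_supply_def by simp
    also have "\<dots> \<le> (\<Sum>u\<in>nbhd VG EG x. \<Sum>y'\<in>VH. f (u, y')) + (\<Sum>y'\<in>nbhd VH EH y. f (x, y'))"
      using g_less(2)[OF xy(1)] col nbhd_subset[of VG EG x] xy(1) by (simp add: f_def subset_iff)
    finally show "2 \<le> 0 + (\<Sum>q\<in>nbhd (lex_vertices VG VH) (lex_edges VG EG VH EH) p. f q)"
      unfolding p sum_nbhd_lex[OF G H xy] by simp
  qed
  then have "italian_domination_number (lex_vertices VG VH) (lex_edges VG EG VH EH)
      \<le> (\<Sum>p\<in>lex_vertices VG VH. f p)"
    by (rule italian_domination_number_le_sum)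
  also have "\<dots> = (\<Sum>x\<in>VG. g x)"
    unfolding sum_lex_vertices using col by simp
  finally show ?thesis .
qed

lemma ex_italian_with_supply_uniform:
  fixes c :: nat
  assumes fin: "finite V" and S: "S \<subseteq> V" and c: "0 < c" "c < 3"
    and supplied: "\<forall>v\<in>V - S. 2 \<le> s + c * card (nbhd V E v \<inter> S)"
  shows "\<exists>h. italian_with_supply V E s h \<and> sum h V = c * card S"
proof (intro exI conjI)
  let ?h = "\<lambda>v. if v \<in> S then c else 0"
  have "(\<Sum>u\<in>nbhd V E v. ?h u) = c * card (nbhd V E v \<inter> S)" for v
    using finite_subset[OF nbhd_subset fin] by (rule sum_uniform_on)
  then show "italian_with_supply V E s ?h"
    using S c supplied unfolding italian_with_supply_def by auto
  show "sum ?h V = c * card S"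
    using sum_uniform_on[OF fin] S by (simp add: Int_absorb1)
qed

lemma nth_min_2_add:
  "w ! min t 2 + min t 2 = (if t = 0 then w ! 0 else if t = 1 then w ! 1 + 1 else w ! 2 + 2)"
proof -
  consider "t = 0" | "t = 1" | "t \<ge> 2" by linarith
  then show ?thesis by cases (simp_all add: min_def)
qed

lemma italian_lex_eq_gamma_w:
  assumes G: "simple_graph VG EG" and noiso: "no_isolated VG EG" and H: "simple_graph VH EH"
    and VH: "card VH \<ge> 2" and ab: "b \<le> a" "a \<le> 2"
    and column1: "\<And>s h. italian_with_supply VH EH s h \<Longrightarrow> sum h VH = 1 \<Longrightarrow> a \<le> s"
    and column2: "\<And>s h. italian_with_supply VH EH s h \<Longrightarrow> sum h VH \<ge> 2 \<Longrightarrow>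
        b + 2 \<le> s + sum h VH"
    and pattern1: "\<exists>h. italian_with_supply VH EH a h \<and> sum h VH = 1"
    and pattern2: "\<exists>h. italian_with_supply VH EH b h \<and> sum h VH = 2"
  shows "italian_domination_number (lex_vertices VG VH) (lex_edges VG EG VH EH)
    = gamma_w VG EG [2, a, b]"
proof -
  have w: "length [2, a, b] = 3" "sorted_wrt (\<ge>) [2, a, b]" "\<forall>c\<in>set [2, a, b]. c \<le> 2"
    using ab by auto
  have column: "[2, a, b] ! min (sum h VH) 2 + min (sum h VH) 2 \<le> s + sum h VH"
    if h: "italian_with_supply VH EH s h" for s h
    using italian_with_supply_total_ge[OF VH h] column1[OF h] column2[OF h]
    by (simp add: nth_min_2_add)
  obtain g where g: "w_dominating VG EG [2, a, b] g"
    and le: "(\<Sum>x\<in>VG. g x) \<le> italian_domination_number (lex_vertices VG VH) (lex_edges VG EG VH EH)"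
    using ex_w_dominating_le_italian_lex[OF G noiso H w column] by blast
  obtain g' where g': "w_dominating VG EG [2, a, b] g'" "(\<Sum>x\<in>VG. g' x) = gamma_w VG EG [2, a, b]"
    using gamma_w_attained[OF g] by blast
  have "\<exists>h. italian_with_supply VH EH ([2, a, b] ! k) h \<and> sum h VH = k" if "k < length [2, a, b]" for k
  proof -
    from that consider "k = 0" | "k = 1" | "k = 2" by fastforce
    then show ?thesis
    proof cases
      case 1
      then show ?thesis by (intro exI[of _ "\<lambda>_. 0"]) (simp add: italian_with_supply_def)
    qed (use pattern1 pattern2 in simp_all)
  qed
  then have "italian_domination_number (lex_vertices VG VH) (lex_edges VG EG VH EH)
      \<le> gamma_w VG EG [2, a, b]"
    using italian_lex_le_w_dominating[OF G H _ g'(1)] g'(2) by metis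
  moreover have "gamma_w VG EG [2, a, b] \<le> (\<Sum>x\<in>VG. g x)" by (rule gamma_w_le_sum[OF g])
  ultimately show ?thesis using le by linarith
qed

lemma italian_lex_eq_gamma_210:
  assumes G: "simple_graph VG EG" and noiso: "no_isolated VG EG" and H: "simple_graph VH EH"
    and VH: "card VH \<ge> 2" and dom: "domination_number VH EH = 1"
  shows "italian_domination_number (lex_vertices VG VH) (lex_edges VG EG VH EH)
    = gamma_w VG EG [2, 1, 0]"
proof -
  have fin: "finite VH" using H by (rule simple_graph_finite)
  show ?thesis
  proof (rule italian_lex_eq_gamma_w[OF G noiso H VH])
    fix s h assume "italian_with_supply VH EH s h" "sum h VH = 1"
    then show "1 \<le> s" using italian_with_supply_total_ge[OF VH] by fastforce
  next
    obtain y0 where "dominating_set VH EH {y0}"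
      using domination_number_attained[of VH EH] dom by (metis card_1_singletonE)
    then have y0: "{y0} \<subseteq> VH" and "\<forall>v\<in>VH - {y0}. y0 \<in> nbhd VH EH v"
      unfolding dominating_set_def by blast+
    then have adj: "\<forall>v\<in>VH - {y0}. card (nbhd VH EH v \<inter> {y0}) = 1" by simp
    show "\<exists>h. italian_with_supply VH EH 1 h \<and> sum h VH = 1"
      using ex_italian_with_supply_uniform[OF fin y0, of 1] adj by simp
    show "\<exists>h. italian_with_supply VH EH 0 h \<and> sum h VH = 2"
      using ex_italian_with_supply_uniform[OF fin y0, of 2] adj by simp
  qed simp_all
qed

lemma italian_lex_eq_gamma_220:
  assumes G: "simple_graph VG EG" and noiso: "no_isolated VG EG" and H: "simple_graph VH EH"
    and VH: "card VH \<ge> 2" and two_dom: "two_domination_number VH EH = 2"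
    and dom: "domination_number VH EH \<ge> 2"
  shows "italian_domination_number (lex_vertices VG VH) (lex_edges VG EG VH EH)
    = gamma_w VG EG [2, 2, 0]"
proof -
  have fin: "finite VH" using H by (rule simple_graph_finite)
  show ?thesis
  proof (rule italian_lex_eq_gamma_w[OF G noiso H VH])
    fix s h assume h: "italian_with_supply VH EH s h" "sum h VH = 1"
    then show "2 \<le> s" using domination_number_le_sum[OF fin h(1)] dom by fastforce
  next
    obtain a b where "two_dominating_set VH EH {a, b}" "a \<noteq> b"
      using two_domination_number_attained[of VH EH] two_dom by (metis card_2_iff)
    then have ab: "{a} \<subseteq> VH" "{a, b} \<subseteq> VH" "card {a, b} = 2"
      and two_adj: "\<forall>v\<in>VH - {a, b}. 2 \<le> card (nbhd VH EH v \<inter> {a, b})"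
      unfolding two_dominating_set_def by auto
    show "\<exists>h. italian_with_supply VH EH 2 h \<and> sum h VH = 1"
      using ex_italian_with_supply_uniform[OF fin ab(1), of 1] by simp
    show "\<exists>h. italian_with_supply VH EH 0 h \<and> sum h VH = 2"
      using ex_italian_with_supply_uniform[OF fin ab(2), of 1] ab(3) two_adj by simp
  qed simp_all
qed

lemma italian_lex_eq_gamma_221:
  assumes G: "simple_graph VG EG" and noiso: "no_isolated VG EG" and H: "simple_graph VH EH"
    and VH: "card VH \<ge> 2" and dom: "domination_number VH EH = 2"
    and italian: "italian_domination_number VH EH \<ge> 3"
  shows "italian_domination_number (lex_vertices VG VH) (lex_edges VG EG VH EH)
    = gamma_w VG EG [2, 2, 1]"
proof -
  have fin: "finite VH" using H by (rule simple_graph_finite)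
  show ?thesis
  proof (rule italian_lex_eq_gamma_w[OF G noiso H VH])
    fix s h assume h: "italian_with_supply VH EH s h" "sum h VH = 1"
    then show "2 \<le> s" using domination_number_le_sum[OF fin h(1)] dom by fastforce
  next
    fix s h assume h: "italian_with_supply VH EH s h" "sum h VH \<ge> 2"
    then show "1 + 2 \<le> s + sum h VH"
      using italian_domination_number_le_sum[of VH EH h] italian by (cases "s = 0") auto
  next
    obtain a b where "dominating_set VH EH {a, b}" "a \<noteq> b"
      using domination_number_attained[of VH EH] dom by (metis card_2_iff)
    then have ab: "{a} \<subseteq> VH" "{a, b} \<subseteq> VH" "card {a, b} = 2"
      and adj: "\<forall>v\<in>VH - {a, b}. 1 \<le> card (nbhd VH EH v \<inter> {a, b})"
      unfolding dominating_set_def by (auto simp: Suc_le_eq card_gt_0_iff)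
    show "\<exists>h. italian_with_supply VH EH 2 h \<and> sum h VH = 1"
      using ex_italian_with_supply_uniform[OF fin ab(1), of 1] by simp
    show "\<exists>h. italian_with_supply VH EH 1 h \<and> sum h VH = 2"
      using ex_italian_with_supply_uniform[OF fin ab(2), of 1] ab(3) adj by simp
  qed simp_all
qed

lemma italian_lex_eq_gamma_222:
  assumes G: "simple_graph VG EG" and noiso: "no_isolated VG EG" and H: "simple_graph VH EH"
    and VH: "card VH \<ge> 2" and dom: "domination_number VH EH \<ge> 3"
    and italian: "italian_domination_number VH EH \<ge> 4"
  shows "italian_domination_number (lex_vertices VG VH) (lex_edges VG EG VH EH)
    = gamma_w VG EG [2, 2, 2]"
proof -
  have fin: "finite VH" using H by (rule simple_graph_finite)
  show ?thesis
  proof (rule italian_lex_eq_gamma_w[OF G noiso H VH])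
    fix s h assume h: "italian_with_supply VH EH s h" "sum h VH = 1"
    then show "2 \<le> s" using domination_number_le_sum[OF fin h(1)] dom by fastforce
  next
    fix s h assume h: "italian_with_supply VH EH s h" "sum h VH \<ge> 2"
    consider "s = 0" | "s = 1" | "s \<ge> 2" by linarith
    then show "2 + 2 \<le> s + sum h VH"
    proof cases
      case 1
      then show ?thesis using italian_domination_number_le_sum[of VH EH h] h(1) italian by simp
    next
      case 2
      then show ?thesis using domination_number_le_sum[OF fin h(1)] dom by simp
    qed (use h(2) in simp)
  next
    obtain y0 where "y0 \<in> VH" using VH by fastforce
    then have y0: "{y0} \<subseteq> VH" by simp
    show "\<exists>h. italian_with_supply VH EH 2 h \<and> sum h VH = 1"
      using ex_italian_with_supply_uniform[OF fin y0, of 1] by simp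
    show "\<exists>h. italian_with_supply VH EH 2 h \<and> sum h VH = 2"
      using ex_italian_with_supply_uniform[OF fin y0, of 2] by simp
  qed simp_all
qed

theorem theorem2:
  fixes VG :: "'a set" and EG :: "'a \<Rightarrow> 'a \<Rightarrow> bool"
    and VH :: "'b set" and EH :: "'b \<Rightarrow> 'b \<Rightarrow> bool"
  assumes G: "simple_graph VG EG" and noiso: "no_isolated VG EG"
    and H: "simple_graph VH EH" and nontriv: "card VH \<ge> 2"
    and cond: "italian_domination_number VH EH \<noteq> 3 \<or> domination_number VH EH \<noteq> 3"
  shows
   "(domination_number VH EH = 1 \<longrightarrow>
      italian_domination_number (lex_vertices VG VH) (lex_edges VG EG VH EH) = gamma_w VG EG [2, 1, 0])
  \<and> (two_domination_number VH EH = 2 \<and> domination_number VH EH = 2 \<longrightarrow>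
      italian_domination_number (lex_vertices VG VH) (lex_edges VG EG VH EH) = gamma_w VG EG [2, 2, 0])
  \<and> (two_domination_number VH EH > 2 \<and> domination_number VH EH = 2 \<longrightarrow>
      italian_domination_number (lex_vertices VG VH) (lex_edges VG EG VH EH) = gamma_w VG EG [2, 2, 1])
  \<and> (domination_number VH EH \<ge> 3 \<longrightarrow>
      italian_domination_number (lex_vertices VG VH) (lex_edges VG EG VH EH) = gamma_w VG EG [2, 2, 2])"
proof -
  have "domination_number VH EH \<le> italian_domination_number VH EH"
    using H by (simp add: domination_number_le_italian simple_graph_finite)
  then have "domination_number VH EH \<ge> 3 \<Longrightarrow> italian_domination_number VH EH \<ge> 4"
    using cond by linarith
  then show ?thesis
    using italian_lex_eq_gamma_210[OF G noiso H nontriv] italian_lex_eq_gamma_220[OF G noiso H nontriv]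
      italian_lex_eq_gamma_221[OF G noiso H nontriv] italian_domination_number_ge_3[OF nontriv]
      italian_lex_eq_gamma_222[OF G noiso H nontriv]
    by auto
qed

end
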